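(* Let $B$ be a Banach left $A$-module, and let $(e_\alpha)_\alpha\subseteq A$ be a bounded left approximate identity for $A$ with $e_\alpha\to e''$ weak$^*$ in $A^{**}$, where $e''$ is a left unit of $A^{**}$ for the first Arens product. Suppose $Z^t_{e''}(B^{**})=B^{**}$. Then $AB=B$ (i.e. every $b\in B$ can be written $b=ax$ with $a\in A$, $x\in B$) if and only if $\pi_\ell^{***}(e'',b'')=b''$ for all $b''\in B^{**}$.
   Context: $A$ is a Banach algebra, $B$ a Banach left $A$-module with action $\pi_\ell(a,b)=ab$. A bounded left approximate identity for $A$ is a bounded net $(e_\alpha)\subseteq A$ with $e_\alpha a\to a$ for all $a\in A$. For a bounded bilinear $m:X\times Y\to Z$: $m^*:Z^*\times X\to Y^*$, $\langle m^*(z',x),y\rangle=\langle z',m(x,y)\rangle$; $m^{**}:Y^{**}\times Z^*\to X^*$, $\langle m^{**}(y'',z'),x\rangle=\langle y'',m^*(z',x)\rangle$; $m^{***}:X^{**}\times Y^{**}\to Z^{**}$, $\langle m^{***}(x'',y''),z'\rangle=\langle x'',m^{**}(y'',z')\rangle$; $m^t(y,x)=m(x,y)$ and $m^{t***t}(x'',y'')=(m^t)^{***}(y'',x'')$. The first Arens product on $A^{**}$ is $m^{***}$ for $m$ the multiplication of $A$. For $a''\in A^{**}$, $Z^t_{a''}(B^{**})=\{b''\in B^{**}:\pi_\ell^{t***t}(a'',b'')=\pi_\ell^{***}(a'',b'')\}$. *)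

theory Defs
  imports "HOL-Analysis.Analysis"
begin

definition arens1 :: "('x::real_normed_vector \<Rightarrow> 'y::real_normed_vector \<Rightarrow> 'z::real_normed_vector)
    \<Rightarrow> ('z \<Rightarrow>\<^sub>L real) \<Rightarrow> 'x \<Rightarrow> ('y \<Rightarrow>\<^sub>L real)" where
  "arens1 m z' x = Blinfun (\<lambda>y. blinfun_apply z' (m x y))"

definition arens2 :: "('x::real_normed_vector \<Rightarrow> 'y::real_normed_vector \<Rightarrow> 'z::real_normed_vector)
    \<Rightarrow> (('y \<Rightarrow>\<^sub>L real) \<Rightarrow>\<^sub>L real) \<Rightarrow> ('z \<Rightarrow>\<^sub>L real) \<Rightarrow> ('x \<Rightarrow>\<^sub>L real)" where
  "arens2 m y'' z' = Blinfun (\<lambda>x. blinfun_apply y'' (arens1 m z' x))"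

definition arens3 :: "('x::real_normed_vector \<Rightarrow> 'y::real_normed_vector \<Rightarrow> 'z::real_normed_vector)
    \<Rightarrow> (('x \<Rightarrow>\<^sub>L real) \<Rightarrow>\<^sub>L real) \<Rightarrow> (('y \<Rightarrow>\<^sub>L real) \<Rightarrow>\<^sub>L real) \<Rightarrow> (('z \<Rightarrow>\<^sub>L real) \<Rightarrow>\<^sub>L real)" where
  "arens3 m x'' y'' = Blinfun (\<lambda>z'. blinfun_apply x'' (arens2 m y'' z'))"

(* m^t (y,x) = m (x,y);  m^{t***t}(x'',y'') = (m^t)^{***}(y'',x''). *)
definition transp_bil :: "('x \<Rightarrow> 'y \<Rightarrow> 'z) \<Rightarrow> 'y \<Rightarrow> 'x \<Rightarrow> 'z" where
  "transp_bil m y x = m x y"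

definition arens3t :: "('x::real_normed_vector \<Rightarrow> 'y::real_normed_vector \<Rightarrow> 'z::real_normed_vector)
    \<Rightarrow> (('x \<Rightarrow>\<^sub>L real) \<Rightarrow>\<^sub>L real) \<Rightarrow> (('y \<Rightarrow>\<^sub>L real) \<Rightarrow>\<^sub>L real) \<Rightarrow> (('z \<Rightarrow>\<^sub>L real) \<Rightarrow>\<^sub>L real)" where
  "arens3t m x'' y'' = arens3 (transp_bil m) y'' x''"

definition banach_left_module :: "('a::{real_normed_algebra,banach} \<Rightarrow> 'b::banach \<Rightarrow> 'b) \<Rightarrow> bool" where
  "banach_left_module act \<longleftrightarrow> bounded_bilinear act \<and> (\<forall>a c x. act (a * c) x = act a (act c x))"

definition Zt :: "('a::real_normed_vector \<Rightarrow> 'b::real_normed_vector \<Rightarrow> 'b)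
    \<Rightarrow> (('a \<Rightarrow>\<^sub>L real) \<Rightarrow>\<^sub>L real) \<Rightarrow> (('b \<Rightarrow>\<^sub>L real) \<Rightarrow>\<^sub>L real) set" where
  "Zt act a'' = {b''. arens3t act a'' b'' = arens3 act a'' b''}"

(* Nets: a net indexed by 'i along a proper filter F (directed-set nets are the
  special case of the section filter of a directed set). *)
definition bounded_left_approx_identity :: "('i \<Rightarrow> 'a::{real_normed_algebra,banach}) \<Rightarrow> 'i filter \<Rightarrow> bool" where
  "bounded_left_approx_identity e F \<longleftrightarrow> F \<noteq> bot \<and> (\<exists>M. \<forall>i. norm (e i) \<le> M)
     \<and> (\<forall>a. ((\<lambda>i. e i * a) \<longlongrightarrow> a) F)"

definition weak_star_conv_bidual :: "('i \<Rightarrow> 'x::real_normed_vector) \<Rightarrow> (('x \<Rightarrow>\<^sub>L real) \<Rightarrow>\<^sub>L real) \<Rightarrow> 'i filter \<Rightarrow> bool" where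
  "weak_star_conv_bidual e x'' F \<longleftrightarrow> (\<forall>f::'x \<Rightarrow>\<^sub>L real. ((\<lambda>i. blinfun_apply f (e i)) \<longlongrightarrow> blinfun_apply x'' f) F)"

end

theory Submission
  imports Defs
begin

(* The proof passes through the "essential part" of B, the set of y with
   e i y \<rightarrow> y in norm:
   - by the hypothesis on Z^t and weak-star convergence, the condition on the bidual is
     equivalent to  f(e i y) \<rightarrow> f(y)  for all y in B and all f in the dual of B
     ("weak essentiality");
   - if AB = B, every y is essential, hence weakly essential;
   - if every y is weakly essential, then by Hahn-Banach separation every y lies in the
     closed span of the products, and this closed span is essential; so B is essential
     and the Cohen-Hewitt factorization theorem gives AB = B. *)

section \<open>The Hahn-Banach theorem for real normed spaces\<close>

(* Working with graphs (sets of pairs) lets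
   Zorn's lemma act on the inclusion order directly. *)
definition norm_dominated_graph :: "('b::real_normed_vector \<times> real) set \<Rightarrow> bool" where
  "norm_dominated_graph G \<longleftrightarrow>
     (\<forall>x a y b. (x, a) \<in> G \<longrightarrow> (y, b) \<in> G \<longrightarrow> (x + y, a + b) \<in> G) \<and>
     (\<forall>x a r. (x, a) \<in> G \<longrightarrow> (r *\<^sub>R x, r * a) \<in> G) \<and>
     (\<forall>x a. (x, a) \<in> G \<longrightarrow> a \<le> norm x)"

lemma norm_dominated_graphD:
  assumes "norm_dominated_graph G"
  shows "(x, a) \<in> G \<Longrightarrow> (y, b) \<in> G \<Longrightarrow> (x + y, a + b) \<in> G"
    and "(x, a) \<in> G \<Longrightarrow> (r *\<^sub>R x, r * a) \<in> G"
    and "(x, a) \<in> G \<Longrightarrow> a \<le> norm x"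
  using assms unfolding norm_dominated_graph_def by blast+

(* Such a graph is automatically single-valued: (x,a) and (x,b) give (0, a - b), and
   domination by the norm of 0 forces a \<le> b. *)
lemma norm_dominated_graph_single_valued:
  assumes G: "norm_dominated_graph G" and "(x, a) \<in> G" "(x, b) \<in> G"
  shows "a = b"
proof -
  have "a - b \<le> 0" if "(x, a) \<in> G" "(x, b) \<in> G" for a b
  proof -
    have "(x + (-1) *\<^sub>R x, a + (-1) * b) \<in> G"
      using that norm_dominated_graphD[OF G] by blast
    thus ?thesis using norm_dominated_graphD(3)[OF G] by fastforce
  qed
  from this[OF assms(2,3)] this[OF assms(3,2)] show ?thesis by simp
qed

lemma norm_dominated_graph_Union_chain:
  assumes "chain\<^sub>\<subseteq> C" and "\<And>G. G \<in> C \<Longrightarrow> norm_dominated_graph G"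
  shows "norm_dominated_graph (\<Union>C)"
  unfolding norm_dominated_graph_def
proof (intro conjI allI impI)
  fix x a y b assume "(x, a) \<in> \<Union>C" "(y, b) \<in> \<Union>C"
  then obtain X Y where XY: "X \<in> C" "Y \<in> C" "(x, a) \<in> X" "(y, b) \<in> Y" by auto
  with assms(1) have "X \<subseteq> Y \<or> Y \<subseteq> X" by (auto simp: chain_subset_def)
  with XY norm_dominated_graphD(1)[OF assms(2)] show "(x + y, a + b) \<in> \<Union>C" by blast
next
  fix x a r assume "(x, a) \<in> \<Union>C"
  with norm_dominated_graphD(2)[OF assms(2)] show "(r *\<^sub>R x, r * a) \<in> \<Union>C" by blast
next
  fix x a assume "(x, a) \<in> \<Union>C"
  with norm_dominated_graphD(3)[OF assms(2)] show "a \<le> norm x" by blast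
qed

lemma norm_scaleR_inverse_add:
  fixes x y :: "'b::real_normed_vector"
  assumes "s > 0"
  shows "s * norm ((1 / s) *\<^sub>R x + y) = norm (x + s *\<^sub>R y)"
proof -
  have "s * norm ((1 / s) *\<^sub>R x + y) = norm (s *\<^sub>R ((1 / s) *\<^sub>R x + y))" using assms by simp
  also have "s *\<^sub>R ((1 / s) *\<^sub>R x + y) = x + s *\<^sub>R y" using assms by (simp add: algebra_simps)
  finally show ?thesis .
qed

(* The key inequality of the Hahn-Banach extension step: for every new direction x0 there
   is a value v with  a - \<parallel>u - x0\<parallel> \<le> v \<le> \<parallel>w + x0\<parallel> - b  for all (u,a), (w,b) in G;
   v is the supremum of the left-hand sides. *)
lemma norm_dominated_graph_extension_value:
  assumes G: "norm_dominated_graph G" and zero: "(0, 0) \<in> G"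
  obtains v where "\<And>u a. (u, a) \<in> G \<Longrightarrow> a - norm (u - x0) \<le> v"
    and "\<And>u a. (u, a) \<in> G \<Longrightarrow> v \<le> norm (u + x0) - a"
proof -
  have sep: "a - norm (u - x0) \<le> norm (w + x0) - b" if "(w, b) \<in> G" "(u, a) \<in> G" for w b u a
  proof -
    have "a + b \<le> norm (u + w)" using that norm_dominated_graphD[OF G] by fastforce
    also have "\<dots> \<le> norm (u - x0) + norm (w + x0)"
      using norm_triangle_ineq[of "u - x0" "w + x0"] by simp
    finally show ?thesis by simp
  qed
  define V where "V = (\<lambda>(u, a). a - norm (u - x0)) ` G"
  have "V \<noteq> {}" using zero by (auto simp: V_def)
  moreover have "bdd_above V"
    using sep[OF zero] by (auto simp: V_def intro!: bdd_aboveI[where M = "norm x0"])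
  ultimately show thesis
    by (intro that[of "Sup V"] cSup_upper cSup_least) (auto simp: V_def intro: sep)
qed

lemma norm_dominated_graph_extend:
  assumes G: "norm_dominated_graph G" and zero: "(0, 0) \<in> G"
  obtains G' where "norm_dominated_graph G'" "G \<subseteq> G'" "\<exists>v. (x0, v) \<in> G'"
proof -
  obtain v where v_low: "\<And>u a. (u, a) \<in> G \<Longrightarrow> a - norm (u - x0) \<le> v"
    and v_up: "\<And>u a. (u, a) \<in> G \<Longrightarrow> v \<le> norm (u + x0) - a"
    using norm_dominated_graph_extension_value[OF G zero] by blast
  define G' where "G' = {(u + t *\<^sub>R x0, a + t * v) | u a t. (u, a) \<in> G}"
  have "norm_dominated_graph G'"
    unfolding norm_dominated_graph_def
  proof (intro conjI allI impI)
    fix x a y b assume "(x, a) \<in> G'" "(y, b) \<in> G'"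
    then obtain x1 a1 t1 x2 a2 t2 where h: "(x1, a1) \<in> G" "(x2, a2) \<in> G"
      "x = x1 + t1 *\<^sub>R x0" "a = a1 + t1 * v" "y = x2 + t2 *\<^sub>R x0" "b = a2 + t2 * v"
      unfolding G'_def by blast
    have "(x1 + x2, a1 + a2) \<in> G" using norm_dominated_graphD(1)[OF G h(1,2)] .
    moreover have "x + y = (x1 + x2) + (t1 + t2) *\<^sub>R x0" "a + b = (a1 + a2) + (t1 + t2) * v"
      using h by (auto simp: algebra_simps)
    ultimately show "(x + y, a + b) \<in> G'" unfolding G'_def by blast
  next
    fix x a r assume "(x, a) \<in> G'"
    then obtain x1 a1 t where h: "(x1, a1) \<in> G" "x = x1 + t *\<^sub>R x0" "a = a1 + t * v"
      unfolding G'_def by blast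
    have "(r *\<^sub>R x1, r * a1) \<in> G" using norm_dominated_graphD(2)[OF G h(1)] .
    moreover have "r *\<^sub>R x = r *\<^sub>R x1 + (r * t) *\<^sub>R x0" "r * a = r * a1 + (r * t) * v"
      using h by (auto simp: algebra_simps)
    ultimately show "(r *\<^sub>R x, r * a) \<in> G'" unfolding G'_def by blast
  next
    fix x a assume "(x, a) \<in> G'"
    then obtain x1 a1 t where h: "(x1, a1) \<in> G" "x = x1 + t *\<^sub>R x0" "a = a1 + t * v"
      unfolding G'_def by blast
    consider "t = 0" | "t > 0" | "t < 0" by linarith
    thus "a \<le> norm x"
    proof cases
      case 1 thus ?thesis using h norm_dominated_graphD(3)[OF G] by auto
    next
      case 2
      have "((1 / t) *\<^sub>R x1, (1 / t) * a1) \<in> G" using norm_dominated_graphD(2)[OF G h(1)] .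
      from v_up[OF this] have "t * v \<le> t * norm ((1 / t) *\<^sub>R x1 + x0) - a1"
        using 2 by (simp add: field_simps)
      thus ?thesis using h norm_scaleR_inverse_add[OF 2, of x1 x0] by simp
    next
      case 3
      hence s: "- t > 0" by simp
      have "((1 / - t) *\<^sub>R x1, (1 / - t) * a1) \<in> G" using norm_dominated_graphD(2)[OF G h(1)] .
      from mult_left_mono[OF v_low[OF this], of "- t"]
      have "a1 - (- t) * norm ((1 / - t) *\<^sub>R x1 - x0) \<le> (- t) * v"
        using s by (simp add: right_diff_distrib)
      thus ?thesis using h norm_scaleR_inverse_add[OF s, of x1 "- x0"] by simp
    qed
  qed
  moreover have "G \<subseteq> G'"
  proof
    fix p assume "p \<in> G" thus "p \<in> G'" unfolding G'_def by (cases p) force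
  qed
  moreover have "(x0, v) \<in> G'" unfolding G'_def using zero by force
  ultimately show thesis using that by blast
qed

(* Hahn-Banach: a norm-dominated linear graph extends to a bounded linear functional of
   norm at most 1 on the whole space (a maximal graph, by Zorn, has full domain). *)
theorem hahn_banach_norm_dominated:
  fixes G0 :: "('b::real_normed_vector \<times> real) set"
  assumes G0: "norm_dominated_graph G0" and "G0 \<noteq> {}"
  obtains f where "bounded_linear f" "\<And>x a. (x, a) \<in> G0 \<Longrightarrow> f x = a"
proof -
  let ?A = "{G. norm_dominated_graph G \<and> G0 \<subseteq> G}"
  have "\<exists>U\<in>?A. \<forall>X\<in>C. X \<subseteq> U" if "C \<in> chains ?A" for C
  proof (cases "C = {}")
    case True thus ?thesis using G0 by auto
  next
    case False
    with that norm_dominated_graph_Union_chain[of C] show ?thesis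
      by (auto simp: chains_def) (blast intro!: bexI[of _ "\<Union>C"])
  qed
  then obtain M where M: "norm_dominated_graph M" "G0 \<subseteq> M"
    and M_max: "\<And>X. norm_dominated_graph X \<Longrightarrow> M \<subseteq> X \<Longrightarrow> X = M"
    using Zorn_Lemma2[of ?A] by force
  obtain p where "p \<in> M" using assms(2) M(2) by auto
  hence zero: "(0, 0) \<in> M" using norm_dominated_graphD(2)[OF M(1), of "fst p" "snd p" 0] by simp
  have total: "\<exists>a. (x, a) \<in> M" for x
  proof -
    obtain M' where "norm_dominated_graph M'" "M \<subseteq> M'" "\<exists>v. (x, v) \<in> M'"
      using norm_dominated_graph_extend[OF M(1) zero] .
    thus ?thesis using M_max by blast
  qed
  define f where "f x = (SOME a. (x, a) \<in> M)" for x
  have f_graph: "(x, f x) \<in> M" for x unfolding f_def using total by (rule someI_ex)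
  have f_eq: "f x = a" if "(x, a) \<in> M" for x a
    using norm_dominated_graph_single_valued[OF M(1) f_graph that] .
  have f_add: "f (x + y) = f x + f y" for x y
    using f_eq norm_dominated_graphD(1)[OF M(1) f_graph f_graph] .
  have f_scale: "f (r *\<^sub>R x) = r * f x" for r x
    using f_eq norm_dominated_graphD(2)[OF M(1) f_graph] .
  have f_le: "f x \<le> norm x" for x
    using norm_dominated_graphD(3)[OF M(1) f_graph] .
  have "bounded_linear f"
  proof (rule bounded_linear_intro[where K = 1])
    show "norm (f x) \<le> norm x * 1" for x
      using f_le[of x] f_le[of "(-1) *\<^sub>R x"] f_scale[of "-1" x] by auto
  qed (simp_all add: f_add f_scale)
  thus thesis using that f_eq M(2) by blast
qed

(* Separation: a point outside the closure of a subspace S is separated from S by a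
   bounded linear functional (extend  s + t y \<mapsto> t dist(y, S)  from  S + \<real> y). *)
theorem hahn_banach_separation:
  fixes S :: "'b::real_normed_vector set"
  assumes "subspace S" "y \<notin> closure S"
  obtains f :: "'b \<Rightarrow> real" where "bounded_linear f" "\<And>s. s \<in> S \<Longrightarrow> f s = 0" "f y \<noteq> 0"
proof -
  have S_ne: "S \<noteq> {}" using assms(1) subspace_0 by blast
  define d where "d = infdist y S"
  have d_pos: "d > 0"
    using in_closure_iff_infdist_zero[OF S_ne] assms(2) infdist_nonneg[of y S] unfolding d_def by force
  define G0 where "G0 = {(s + t *\<^sub>R y, t * d) | s t. s \<in> S}"
  have "norm_dominated_graph G0" unfolding norm_dominated_graph_def
  proof (intro conjI allI impI)
    fix x a z b assume "(x, a) \<in> G0" "(z, b) \<in> G0"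
    then obtain s1 t1 s2 t2 where h: "s1 \<in> S" "s2 \<in> S"
      "x = s1 + t1 *\<^sub>R y" "a = t1 * d" "z = s2 + t2 *\<^sub>R y" "b = t2 * d"
      unfolding G0_def by blast
    have "s1 + s2 \<in> S" using h assms(1) subspace_add by blast
    moreover have "x + z = (s1 + s2) + (t1 + t2) *\<^sub>R y" "a + b = (t1 + t2) * d"
      using h by (auto simp: algebra_simps)
    ultimately show "(x + z, a + b) \<in> G0" unfolding G0_def by blast
  next
    fix x a r assume "(x, a) \<in> G0"
    then obtain s t where h: "s \<in> S" "x = s + t *\<^sub>R y" "a = t * d" unfolding G0_def by blast
    have "r *\<^sub>R s \<in> S" using h assms(1) subspace_scale by blast
    moreover have "r *\<^sub>R x = r *\<^sub>R s + (r * t) *\<^sub>R y" "r * a = (r * t) * d"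
      using h by (auto simp: algebra_simps)
    ultimately show "(r *\<^sub>R x, r * a) \<in> G0" unfolding G0_def by blast
  next
    fix x a assume "(x, a) \<in> G0"
    then obtain s t where h: "s \<in> S" "x = s + t *\<^sub>R y" "a = t * d" unfolding G0_def by blast
    show "a \<le> norm x"
    proof (cases "t > 0")
      case False
      hence "t * d \<le> 0" using d_pos by (simp add: mult_nonpos_nonneg)
      thus ?thesis using h by (metis norm_ge_zero order.trans)
    next
      case True
      have "(1 / t) *\<^sub>R (- s) \<in> S" using h assms(1) subspace_scale subspace_neg by blast
      hence "d \<le> norm (y - (1 / t) *\<^sub>R (- s))" unfolding d_def dist_norm[symmetric] by (rule infdist_le)
      hence "t * d \<le> t * norm ((1 / t) *\<^sub>R s + y)" using True by (simp add: add.commute)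
      thus ?thesis using h norm_scaleR_inverse_add[OF True, of s y] by simp
    qed
  qed
  moreover have "G0 \<noteq> {}" unfolding G0_def using S_ne by blast
  ultimately obtain f where f: "bounded_linear f" "\<And>x a. (x, a) \<in> G0 \<Longrightarrow> f x = a"
    using hahn_banach_norm_dominated by blast
  have "f s = 0" if "s \<in> S" for s
  proof -
    have "(s + 0 *\<^sub>R y, 0 * d) \<in> G0" unfolding G0_def using that by blast
    thus ?thesis using f(2) by simp
  qed
  moreover have "f y = d"
    using f(2)[of "0 + 1 *\<^sub>R y" "1 * d"] assms(1) subspace_0 unfolding G0_def by fastforce
  ultimately show thesis using that f(1) d_pos by simp
qed

section \<open>Evaluating the Arens extensions\<close>

lemma arens1_apply:
  assumes "bounded_bilinear m"
  shows "blinfun_apply (arens1 m z' x) y = blinfun_apply z' (m x y)"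
proof -
  have "bounded_linear (\<lambda>y. blinfun_apply z' (m x y))"
    using bounded_linear_compose[OF blinfun.bounded_linear_right
        bounded_bilinear.bounded_linear_right[OF assms]] .
  thus ?thesis unfolding arens1_def by (simp add: bounded_linear_Blinfun_apply)
qed

lemma bounded_bilinear_arens1:
  assumes m: "bounded_bilinear m"
  shows "bounded_bilinear (arens1 m)"
proof
  obtain K where K: "\<And>x y. norm (m x y) \<le> norm x * norm y * K" "K \<ge> 0"
    using bounded_bilinear.nonneg_bounded[OF m] by blast
  have "norm (arens1 m z' x) \<le> norm z' * norm x * K" for z' x
  proof (rule norm_blinfun_bound)
    show "0 \<le> norm z' * norm x * K" using K(2) by simp
  next
    fix y
    have "norm (blinfun_apply z' (m x y)) \<le> norm z' * norm (m x y)" by (rule norm_blinfun)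
    also have "\<dots> \<le> norm z' * (norm x * norm y * K)" by (rule mult_left_mono[OF K(1)]) simp
    finally
    show "norm (blinfun_apply (arens1 m z' x) y) \<le> norm z' * norm x * K * norm y"
      by (simp add: arens1_apply[OF m] algebra_simps)
  qed
  thus "\<exists>K. \<forall>z' x. norm (arens1 m z' x) \<le> norm z' * norm x * K" by blast
qed (auto intro!: blinfun_eqI simp: arens1_apply[OF m] blinfun.add_left blinfun.add_right
    blinfun.scaleR_right scaleR_blinfun.rep_eq bounded_bilinear.add_left[OF m] bounded_bilinear.scaleR_left[OF m])

(* Each further Arens extension is the first Arens extension of the previous one, so the
   evaluation formulas for m^{**} and m^{***} follow by iterating the two lemmas above. *)
lemma arens2_eq_arens1_arens1: "arens2 m = arens1 (arens1 m)"
  by (simp add: fun_eq_iff arens1_def arens2_def)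

lemma arens3_eq_arens1_arens2: "arens3 m = arens1 (arens2 m)"
  by (simp add: fun_eq_iff arens1_def arens2_def arens3_def)

lemma arens2_apply:
  assumes "bounded_bilinear m"
  shows "blinfun_apply (arens2 m y'' z') x = blinfun_apply y'' (arens1 m z' x)"
  unfolding arens2_eq_arens1_arens1 by (rule arens1_apply[OF bounded_bilinear_arens1[OF assms]])

lemma arens3_apply:
  assumes "bounded_bilinear m"
  shows "blinfun_apply (arens3 m x'' y'') z' = blinfun_apply x'' (arens2 m y'' z')"
  unfolding arens3_eq_arens1_arens2 arens2_eq_arens1_arens1
  by (rule arens1_apply[OF bounded_bilinear_arens1[OF bounded_bilinear_arens1[OF assms]]])

section \<open>The essential part of a module\<close>

(* The essential part of a module with respect to the net (e i): the vectors y with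
   e i y \<rightarrow> y in norm.  Cohen's theorem says exactly these vectors factor. *)
definition essential_part :: "('a \<Rightarrow> 'b::real_normed_vector \<Rightarrow> 'b) \<Rightarrow> ('i \<Rightarrow> 'a) \<Rightarrow> 'i filter \<Rightarrow> 'b set" where
  "essential_part act e F = {y. ((\<lambda>i. act (e i) y) \<longlongrightarrow> y) F}"

definition weakly_essential :: "('a \<Rightarrow> 'b::real_normed_vector \<Rightarrow> 'b) \<Rightarrow> ('i \<Rightarrow> 'a) \<Rightarrow> 'i filter \<Rightarrow> 'b \<Rightarrow> bool"
  where "weakly_essential act e F y \<longleftrightarrow>
    (\<forall>f :: 'b \<Rightarrow>\<^sub>L real. ((\<lambda>i. blinfun_apply f (act (e i) y)) \<longlongrightarrow> blinfun_apply f y) F)"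

(* Every product  a x  is essential, since  e i (a x) = (e i a) x \<rightarrow> a x. *)
lemma products_in_essential_part:
  assumes "banach_left_module act" and "\<And>a. ((\<lambda>i. e i * a) \<longlongrightarrow> a) F"
  shows "act a x \<in> essential_part act e F"
proof -
  have act: "bounded_bilinear act" and assoc: "\<And>a a' x. act (a * a') x = act a (act a' x)"
    using assms(1) unfolding banach_left_module_def by auto
  have "((\<lambda>i. act (e i * a) x) \<longlongrightarrow> act a x) F"
    using bounded_bilinear.tendsto[OF act assms(2) tendsto_const] .
  thus ?thesis unfolding essential_part_def by (simp add: assoc)
qed

lemma subspace_essential_part:
  assumes "bounded_bilinear act"
  shows "subspace (essential_part act e F)"
  unfolding subspace_def essential_part_def
  by (auto intro!: tendsto_add tendsto_scaleR simp: bounded_bilinear.zero_right[OF assms]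
      bounded_bilinear.add_right[OF assms] bounded_bilinear.scaleR_right[OF assms])

(* For a bounded net the essential part is closed: an \<epsilon>/3 argument with the uniform
   bound \<parallel>e i y\<parallel> \<le> C K \<parallel>y\<parallel>. *)
lemma closed_essential_part:
  assumes act: "bounded_bilinear act" and e_bound: "\<And>i. norm (e i) \<le> C"
  shows "closed (essential_part act e F)"
proof -
  obtain K where K_pos: "K > 0" and K: "\<And>a x. norm (act a x) \<le> norm a * norm x * K"
    using bounded_bilinear.pos_bounded[OF act] by blast
  have C: "C \<ge> 0" using order.trans[OF norm_ge_zero e_bound] .
  have "y \<in> essential_part act e F" if y: "y \<in> closure (essential_part act e F)" for y
    unfolding essential_part_def mem_Collect_eq
  proof (rule tendstoI)
    fix \<epsilon> :: real assume \<epsilon>: "\<epsilon> > 0"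
    define \<delta> where "\<delta> = \<epsilon> / (2 * (C * K + 1))"
    have CK: "C * K + 1 > 0" using C K_pos by (simp add: add_nonneg_pos)
    have \<delta>: "\<delta> > 0" "(C * K + 1) * \<delta> = \<epsilon> / 2"
      unfolding \<delta>_def using \<epsilon> CK by (simp_all add: field_simps)
    obtain s where s: "s \<in> essential_part act e F" "dist s y < \<delta>"
      using y \<delta>(1) unfolding closure_approachable by blast
    have "eventually (\<lambda>i. dist (act (e i) s) s < \<epsilon> / 2) F"
      using s(1) \<epsilon> unfolding essential_part_def by (intro tendstoD) simp_all
    thus "eventually (\<lambda>i. dist (act (e i) y) y < \<epsilon>) F"
    proof eventually_elim
      case (elim i)
      have "norm (act (e i) (y - s)) \<le> C * K * \<delta>"
      proof -
        have "norm (act (e i) (y - s)) \<le> norm (e i) * norm (y - s) * K" by (rule K)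
        also have "\<dots> \<le> C * \<delta> * K"
          using s(2) e_bound[of i] C K_pos
          by (intro mult_right_mono mult_mono) (simp_all add: dist_norm norm_minus_commute)
        finally show ?thesis by (simp add: algebra_simps)
      qed
      moreover have "act (e i) y - y = act (e i) (y - s) + (act (e i) s - s) + (s - y)"
        by (simp add: bounded_bilinear.diff_right[OF act] algebra_simps)
      ultimately have "dist (act (e i) y) y < C * K * \<delta> + \<epsilon> / 2 + \<delta>"
        using elim s(2) norm_triangle_ineq[of "act (e i) (y - s) + (act (e i) s - s)" "s - y"]
          norm_triangle_ineq[of "act (e i) (y - s)" "act (e i) s - s"]
        by (simp add: dist_norm)
      also have "\<dots> = \<epsilon>" using \<delta>(2) by (simp add: algebra_simps)
      finally show ?case .
    qed
  qed
  thus ?thesis unfolding closure_subset_eq[symmetric] by blast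
qed

lemma closure_span_products_subset_essential_part:
  assumes "banach_left_module act" and "bounded_left_approx_identity e F"
  shows "closure (span {act a x | a x. True}) \<subseteq> essential_part act e F"
proof -
  have act: "bounded_bilinear act" using assms(1) unfolding banach_left_module_def by simp
  obtain C where C: "\<And>i. norm (e i) \<le> C" and lai: "\<And>a. ((\<lambda>i. e i * a) \<longlongrightarrow> a) F"
    using assms(2) unfolding bounded_left_approx_identity_def by auto
  have "{act a x | a x. True} \<subseteq> essential_part act e F"
    using products_in_essential_part[OF assms(1) lai] by blast
  hence "span {act a x | a x. True} \<subseteq> essential_part act e F"
    by (rule span_minimal[OF _ subspace_essential_part[OF act]])
  thus ?thesis by (rule closure_minimal[OF _ closed_essential_part[OF act C]])
qed

(* Conversely, a vector on which (e i) acts weakly as the identity lies in the closed span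
   of the products: a functional annihilating the products would vanish on y by
   Hahn-Banach separation. *)
lemma weakly_essential_in_closure_span_products:
  fixes act :: "'a \<Rightarrow> 'b::real_normed_vector \<Rightarrow> 'b"
  assumes F: "F \<noteq> bot" and weak: "weakly_essential act e F y"
  shows "y \<in> closure (span {act a x | a x. True})"
proof (rule ccontr)
  assume "y \<notin> closure (span {act a x | a x. True})"
  then obtain f :: "'b \<Rightarrow> real" where f: "bounded_linear f"
    "\<And>s. s \<in> span {act a x | a x. True} \<Longrightarrow> f s = 0" "f y \<noteq> 0"
    by (rule hahn_banach_separation[OF subspace_span]) blast
  have "act (e i) y \<in> span {act a x | a x. True}" for i by (rule span_base) blast
  hence "f (act (e i) y) = 0" for i by (rule f(2))
  moreover have "((\<lambda>i. blinfun_apply (Blinfun f) (act (e i) y)) \<longlongrightarrow> blinfun_apply (Blinfun f) y) F"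
    using weak unfolding weakly_essential_def by blast
  ultimately have "((\<lambda>i. 0) \<longlongrightarrow> f y) F" by (simp add: bounded_linear_Blinfun_apply[OF f(1)])
  hence "0 = f y" by (rule tendsto_unique[OF F tendsto_const])
  with f(3) show False by simp
qed

section \<open>The Cohen-Hewitt factorization theorem\<close>

lemma convergent_if_increments_summable:
  fixes f :: "nat \<Rightarrow> 'x::banach"
  assumes "\<And>n. norm (f (Suc n) - f n) \<le> g n" and "summable g"
  shows "convergent f"
proof -
  have "summable (\<lambda>n. f (Suc n) - f n)"
    by (rule summable_comparison_test[OF _ assms(2)]) (use assms(1) in auto)
  from summable_LIMSEQ[OF this] have "(\<lambda>n. f n - f 0) \<longlonglongrightarrow> (\<Sum>n. f (Suc n) - f n)"
    by (simp add: sum_lessThan_telescope)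
  hence "(\<lambda>n. (f n - f 0) + f 0) \<longlonglongrightarrow> (\<Sum>n. f (Suc n) - f n) + f 0"
    by (intro tendsto_add tendsto_const)
  thus ?thesis unfolding convergent_def by auto
qed

(* A perturbation I + T of the identity by a linear map of norm \<theta> < 1 is bijective:
   injective by the norm estimate, surjective by the Banach fixed-point theorem applied
   to  x \<mapsto> z - T x. *)
lemma bij_perturbed_identity:
  fixes T :: "'b::banach \<Rightarrow> 'b"
  assumes T: "linear T" and T_bound: "\<And>x. norm (T x) \<le> \<theta> * norm x"
    and \<theta>: "0 \<le> \<theta>" "\<theta> < 1"
  shows "bij (\<lambda>x. x + T x)"
proof (rule bijI)
  show "inj (\<lambda>x. x + T x)"
  proof (rule injI)
    fix x y assume "x + T x = y + T y"
    hence "x - y = T (y - x)" by (simp add: linear_diff[OF T] algebra_simps)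
    hence "norm (x - y) \<le> \<theta> * norm (x - y)"
      using T_bound[of "y - x"] by (simp add: norm_minus_commute)
    hence "(1 - \<theta>) * norm (x - y) \<le> 0" by (simp add: algebra_simps)
    thus "x = y" using \<theta> by (simp add: mult_le_0_iff)
  qed
next
  show "surj (\<lambda>x. x + T x)"
  proof (rule surjI[where f = "\<lambda>z. THE x. z - T x = x"])
    fix z
    have "\<exists>!x. z - T x = x"
    proof (rule banach_fix_type[OF \<theta>], intro allI)
      fix x y
      have "dist (z - T x) (z - T y) = norm (T (y - x))"
        by (simp add: dist_norm linear_diff[OF T] algebra_simps)
      also have "\<dots> \<le> \<theta> * dist x y"
        using T_bound[of "y - x"] by (simp add: dist_norm norm_minus_commute)
      finally show "dist (z - T x) (z - T y) \<le> \<theta> * dist x y" .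
    qed
    from theI'[OF this] show "(THE x. z - T x = x) + T (THE x. z - T x = x) = z"
      by (simp add: algebra_simps)
  qed
qed

(* The construction (Cohen 1959, Hewitt's module version) builds
   b (Suc n) = (1 - c) b n + c (1 - c)^n E n + c E n b n  and shows that  b n \<rightarrow> a  and
   (P n)^-1 y \<rightarrow> x  where  P n = (1 - c)^n I + b n,  whence  y = a x. *)
locale cohen_factorization_data =
  fixes act :: "'a::{real_normed_algebra,banach} \<Rightarrow> 'b::banach \<Rightarrow> 'b"
    and C K c k :: real and pick :: "nat \<Rightarrow> 'a \<Rightarrow> 'a" and y :: 'b
  assumes module: "banach_left_module act"
    and act_bound: "\<And>a x. norm (act a x) \<le> norm a * norm x * K"
    and K_pos: "K > 0"
    and c_pos: "0 < c" and c_less_1: "c < 1" and c_small: "c * C * K \<le> (1 - c) / 2"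
    and k_def: "k = 2 / (1 - c)"
    and pick_bound: "\<And>n b. norm (pick n b) \<le> C"
    and pick_left_unit: "\<And>n b. norm (pick n b * b - b) \<le> (1/2)^n"
    and pick_fixes_y: "\<And>n b. norm (act (pick n b) y - y) \<le> (1/2)^n / k^(Suc n)"
begin

lemma act_bilinear: "bounded_bilinear act"
  and act_assoc: "act (a * a') x = act a (act a' x)"
  using module unfolding banach_left_module_def by auto

lemma k_pos: "k > 0"
  using c_less_1 unfolding k_def by simp

lemma norm_act_le_CK: "norm u \<le> C \<Longrightarrow> norm (act u x) \<le> C * K * norm x"
  using order.trans[OF act_bound mult_right_mono[OF mult_right_mono]] K_pos
  by (simp add: algebra_simps)

definition U :: "'a \<Rightarrow> 'b \<Rightarrow> 'b" where
  "U u x = (1 - c) *\<^sub>R x + c *\<^sub>R act u x"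

lemma linear_U: "linear (U u)"
  by (rule linearI) (simp_all add: U_def bounded_bilinear.add_right[OF act_bilinear]
      bounded_bilinear.scaleR_right[OF act_bilinear] algebra_simps)

lemma U_lower_bound:
  assumes "norm u \<le> C"
  shows "norm x \<le> k * norm (U u x)"
proof -
  have "(1 - c) * norm x \<le> norm (U u x) + c * norm (act u x)"
    using norm_triangle_ineq4[of "U u x" "c *\<^sub>R act u x"] c_pos c_less_1 by (simp add: U_def)
  also have "c * norm (act u x) \<le> (c * C * K) * norm x"
    using mult_left_mono[OF norm_act_le_CK[OF assms], of c] c_pos by (simp add: algebra_simps)
  also have "\<dots> \<le> ((1 - c) / 2) * norm x" by (rule mult_right_mono[OF c_small norm_ge_zero])
  finally show ?thesis using c_less_1 unfolding k_def by (simp add: field_simps)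
qed

lemma bij_U:
  assumes "norm u \<le> C"
  shows "bij (U u)"
proof -
  define T where "T x = (c / (1 - c)) *\<^sub>R act u x" for x
  have "linear T"
    unfolding T_def by (rule linear_compose_scale_right)
      (rule bounded_linear.linear[OF bounded_bilinear.bounded_linear_right[OF act_bilinear]])
  moreover have "norm (T x) \<le> 1/2 * norm x" for x
  proof -
    have "norm (T x) \<le> (c / (1 - c)) * (C * K * norm x)"
      unfolding T_def using mult_left_mono[OF norm_act_le_CK[OF assms], of "c / (1 - c)"] c_pos c_less_1
      by simp
    also have "\<dots> \<le> 1/2 * norm x"
      using mult_right_mono[OF c_small norm_ge_zero[of x]] c_less_1 by (simp add: field_simps)
    finally show ?thesis .
  qed
  ultimately have "bij (\<lambda>x. x + T x)" by (rule bij_perturbed_identity) simp_all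
  moreover have "U u = (\<lambda>x. (1 - c) *\<^sub>R x) \<circ> (\<lambda>x. x + T x)"
    using c_less_1 by (simp add: fun_eq_iff U_def T_def scaleR_add_right)
  moreover have "bij (\<lambda>x::'b. (1 - c) *\<^sub>R x)"
    using c_less_1 by (intro o_bij[where g = "\<lambda>x. (1 / (1 - c)) *\<^sub>R x"]) (auto simp: fun_eq_iff)
  ultimately show ?thesis by (simp add: bij_comp)
qed

definition V :: "'a \<Rightarrow> 'b \<Rightarrow> 'b" where
  "V u = inv (U u)"

lemma V_properties:
  assumes "norm u \<le> C"
  shows U_V: "U u (V u z) = z"
    and V_U: "V u (U u x) = x"
    and linear_V: "linear (V u)"
    and norm_V: "norm (V u z) \<le> k * norm z"
proof -
  have bij: "bij (U u)" using bij_U[OF assms] .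
  show UV: "U u (V u z) = z" for z unfolding V_def by (rule bij_inv_eq_iff[OF bij, THEN iffD1]) simp
  show "V u (U u x) = x" unfolding V_def by (rule inv_f_f[OF bij_is_inj[OF bij]])
  show "linear (V u)"
  proof (rule linearI)
    show "V u (x + z) = V u x + V u z" for x z
      by (rule injD[OF bij_is_inj[OF bij]]) (simp add: UV linear_add[OF linear_U])
    show "V u (r *\<^sub>R x) = r *\<^sub>R V u x" for r x
      by (rule injD[OF bij_is_inj[OF bij]]) (simp add: UV linear_scale[OF linear_U])
  qed
  show "norm (V u z) \<le> k * norm z" using U_lower_bound[OF assms, of "V u z"] by (simp add: UV)
qed

primrec b :: "nat \<Rightarrow> 'a" where
  "b 0 = 0"
| "b (Suc n) = (1 - c) *\<^sub>R b n + (c * (1 - c)^n) *\<^sub>R pick n (b n) + c *\<^sub>R (pick n (b n) * b n)"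

definition E :: "nat \<Rightarrow> 'a" where
  "E n = pick n (b n)"

definition P :: "nat \<Rightarrow> 'b \<Rightarrow> 'b" where
  "P n x = (1 - c)^n *\<^sub>R x + act (b n) x"

primrec Q :: "nat \<Rightarrow> 'b \<Rightarrow> 'b" where
  "Q 0 = id"
| "Q (Suc n) = Q n \<circ> V (E n)"

lemma norm_E: "norm (E n) \<le> C"
  unfolding E_def by (rule pick_bound)

(* The operators P n are composites of the elementary steps,  P (n+1) = U (E n) \<circ> P n,
   so  Q n = V (E 0) \<circ> ... \<circ> V (E (n-1))  inverts P n. *)
lemma P_Suc: "P (Suc n) x = U (E n) (P n x)"
proof -
  have "act (b (Suc n)) x
      = (1 - c) *\<^sub>R act (b n) x + (c * (1 - c)^n) *\<^sub>R act (E n) x + c *\<^sub>R act (E n) (act (b n) x)"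
    by (simp add: E_def bounded_bilinear.add_left[OF act_bilinear]
        bounded_bilinear.scaleR_left[OF act_bilinear] act_assoc)
  thus ?thesis
    by (simp add: P_def U_def bounded_bilinear.add_right[OF act_bilinear]
        bounded_bilinear.scaleR_right[OF act_bilinear] algebra_simps)
qed

lemma P_Q: "P n (Q n z) = z"
proof (induction n arbitrary: z)
  case 0 thus ?case by (simp add: P_def bounded_bilinear.zero_left[OF act_bilinear])
next
  case (Suc n) thus ?case by (simp add: P_Suc U_V[OF norm_E])
qed

lemma Q_linear_bounded: "linear (Q n) \<and> (\<forall>z. norm (Q n z) \<le> k^n * norm z)"
proof (induction n)
  case 0 thus ?case by (simp add: bounded_linear.linear[OF bounded_linear_ident])
next
  case (Suc n)
  from Suc.IH have lin: "linear (Q n)" and bound: "\<And>z. norm (Q n z) \<le> k^n * norm z" by blast+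
  have "norm (Q (Suc n) z) \<le> k^Suc n * norm z" for z
  proof -
    have "norm (Q (Suc n) z) \<le> k^n * norm (V (E n) z)" using bound by simp
    also have "\<dots> \<le> k^n * (k * norm z)"
      using k_pos by (intro mult_left_mono norm_V[OF norm_E]) simp
    finally show ?thesis by (simp add: algebra_simps)
  qed
  moreover have "linear (Q (Suc n))" using linear_compose[OF linear_V[OF norm_E] lin] by simp
  ultimately show ?case by blast
qed

(* The sequence Q n y is Cauchy: each step moves it by at most (1/2)^n, because E n
   moves y by at most (1/2)^n / k^(n+1) and Q (n+1) has norm at most k^(n+1). *)
lemma Q_increment: "norm (Q (Suc n) y - Q n y) \<le> (1/2)^n"
proof -
  have "V (E n) y - y = V (E n) (y - U (E n) y)"
    by (simp add: linear_diff[OF linear_V[OF norm_E]] V_U[OF norm_E])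
  also have "y - U (E n) y = c *\<^sub>R (y - act (E n) y)" by (simp add: U_def algebra_simps)
  finally have V_step: "V (E n) y - y = V (E n) (c *\<^sub>R (y - act (E n) y))" .
  have "Q (Suc n) y - Q n y = Q n (V (E n) y - y)"
    using linear_diff[of "Q n"] Q_linear_bounded[of n] by simp
  hence "Q (Suc n) y - Q n y = Q n (V (E n) (c *\<^sub>R (y - act (E n) y)))" by (simp only: V_step)
  hence "norm (Q (Suc n) y - Q n y) \<le> k^n * norm (V (E n) (c *\<^sub>R (y - act (E n) y)))"
    using Q_linear_bounded[of n] by simp
  also have "\<dots> \<le> k^n * (k * norm (c *\<^sub>R (y - act (E n) y)))"
    using k_pos by (intro mult_left_mono norm_V[OF norm_E]) simp
  also have "\<dots> \<le> k^n * (k * ((1/2)^n / k^Suc n))"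
  proof -
    have "norm (c *\<^sub>R (y - act (E n) y)) \<le> norm (act (E n) y - y)"
      using c_pos c_less_1 by (simp add: norm_minus_commute mult_left_le_one_le)
    also have "\<dots> \<le> (1/2)^n / k^Suc n" unfolding E_def by (rule pick_fixes_y)
    finally show ?thesis using k_pos by (intro mult_left_mono) auto
  qed
  also have "\<dots> = (1/2)^n" using k_pos by (simp add: field_simps)
  finally show ?thesis .
qed

(* The factors b n form a Cauchy sequence, since E n is a good left unit for b n. *)
lemma b_increment: "norm (b (Suc n) - b n) \<le> (1/2)^n + (1 - c)^n * C"
proof -
  have "b (Suc n) - b n = c *\<^sub>R (E n * b n - b n) + (c * (1 - c)^n) *\<^sub>R E n"
    by (simp add: E_def algebra_simps)
  hence "norm (b (Suc n) - b n) \<le> c * norm (E n * b n - b n) + c * (1 - c)^n * norm (E n)"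
    using c_pos c_less_1 norm_triangle_ineq[of "c *\<^sub>R (E n * b n - b n)" "(c * (1 - c)^n) *\<^sub>R E n"]
    by simp
  also have "\<dots> \<le> 1 * (1/2)^n + 1 * (1 - c)^n * C"
  proof (rule add_mono)
    show "c * norm (E n * b n - b n) \<le> 1 * (1/2)^n"
      using pick_left_unit[of n "b n"] c_less_1 by (intro mult_mono) (simp_all add: E_def)
    show "c * (1 - c)^n * norm (E n) \<le> 1 * (1 - c)^n * C"
      using norm_E[of n] c_pos c_less_1 by (intro mult_mono) simp_all
  qed
  finally show ?thesis by simp
qed

(* Passing to the limit in  y = P n (Q n y) = (1 - c)^n Q n y + b n (Q n y)  gives  y = a x. *)
theorem factorization: "\<exists>a x. y = act a x"
proof -
  have "convergent (\<lambda>n. Q n y)"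
    by (rule convergent_if_increments_summable[where g = "\<lambda>n. (1/2)^n", OF Q_increment])
      (simp add: summable_geometric)
  then obtain x where Qx: "(\<lambda>n. Q n y) \<longlonglongrightarrow> x" unfolding convergent_def by blast
  have "summable (\<lambda>n. (1/2::real)^n + (1 - c)^n * C)"
    using c_pos c_less_1 by (intro summable_add summable_mult2 summable_geometric) simp_all
  hence "convergent b" by (rule convergent_if_increments_summable[where f = b, OF b_increment])
  then obtain a where ba: "b \<longlonglongrightarrow> a" unfolding convergent_def by blast
  have "(\<lambda>n. (1 - c)^n) \<longlonglongrightarrow> (0::real)"
    using c_pos c_less_1 by (intro LIMSEQ_power_zero) simp
  hence "(\<lambda>n. P n (Q n y)) \<longlonglongrightarrow> 0 *\<^sub>R x + act a x"
    unfolding P_def by (intro tendsto_add tendsto_scaleR Qx bounded_bilinear.tendsto[OF act_bilinear ba])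
  hence "(\<lambda>n. y) \<longlonglongrightarrow> act a x" by (simp add: P_Q)
  hence "y = act a x" by (rule LIMSEQ_unique[OF tendsto_const])
  thus ?thesis by blast
qed

end

(* The picking function is obtained from the
   convergence  e i b \<rightarrow> b  and  e i y \<rightarrow> y  by choice. *)
theorem cohen_factorization:
  fixes act :: "'a::{real_normed_algebra,banach} \<Rightarrow> 'b::banach \<Rightarrow> 'b" and e :: "'i \<Rightarrow> 'a"
  assumes module: "banach_left_module act" and e: "bounded_left_approx_identity e F"
    and y: "y \<in> essential_part act e F"
  shows "\<exists>a x. y = act a x"
proof -
  have F: "F \<noteq> bot" and lai: "\<And>a. ((\<lambda>i. e i * a) \<longlongrightarrow> a) F"
    using e unfolding bounded_left_approx_identity_def by auto
  obtain M where M: "\<And>i. norm (e i) \<le> M"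
    using e unfolding bounded_left_approx_identity_def by auto
  obtain K where K_pos: "K > 0" and K: "\<And>a x. norm (act a x) \<le> norm a * norm x * K"
    using bounded_bilinear.pos_bounded module unfolding banach_left_module_def by blast
  define C where "C = max M 1"
  define c where "c = 1 / (2 * C * K + 2)"
  define k where "k = 2 / (1 - c)"
  have CK: "C * K > 0" using K_pos by (simp add: C_def)
  have c: "0 < c" "c < 1" "c * C * K \<le> (1 - c) / 2"
    unfolding c_def using CK by (auto simp: field_simps)
  have k_pos: "k > 0" unfolding k_def using c by simp
  define good where "good n b i \<longleftrightarrow>
      norm (e i * b - b) \<le> (1/2)^n \<and> norm (act (e i) y - y) \<le> (1/2)^n / k^Suc n" for n b i
  have good: "\<exists>i. good n b i" for n b
  proof -
    have "eventually (\<lambda>i. dist (e i * b) b < (1/2)^n) F"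
      using lai[of b] by (rule tendstoD) simp
    moreover have "eventually (\<lambda>i. dist (act (e i) y) y < (1/2)^n / k^Suc n) F"
      using y k_pos unfolding essential_part_def by (intro tendstoD) simp_all
    ultimately have "eventually (\<lambda>i. norm (e i * b - b) \<le> (1/2)^n
        \<and> norm (act (e i) y - y) \<le> (1/2)^n / k^Suc n) F"
      by eventually_elim (simp add: dist_norm)
    thus ?thesis using eventually_happens F unfolding good_def by blast
  qed
  define \<iota> where "\<iota> n b = (SOME i. good n b i)" for n b
  have \<iota>: "norm (e (\<iota> n b) * b - b) \<le> (1/2)^n" "norm (act (e (\<iota> n b)) y - y) \<le> (1/2)^n / k^Suc n"
    for n b using someI_ex[OF good[of n b]] unfolding \<iota>_def good_def by auto
  interpret cohen_factorization_data act C K c k "\<lambda>n b. e (\<iota> n b)" y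
    by unfold_locales (use module K K_pos c \<iota> M in \<open>auto simp: k_def C_def intro: le_max_iff_disj[THEN iffD2]\<close>)
  show ?thesis by (rule factorization)
qed

(* Hence, for a bounded left approximate identity, B = AB exactly when every vector is
   weakly essential: products are essential, and conversely weak essentiality of all of B
   makes B essential, so Cohen-Hewitt applies. *)
theorem factorization_iff_weakly_essential:
  assumes module: "banach_left_module act" and e: "bounded_left_approx_identity e F"
  shows "(\<forall>b. \<exists>a x. b = act a x) \<longleftrightarrow> (\<forall>y. weakly_essential act e F y)"
proof
  assume factors: "\<forall>b. \<exists>a x. b = act a x"
  have lai: "\<And>a. ((\<lambda>i. e i * a) \<longlongrightarrow> a) F"
    using e unfolding bounded_left_approx_identity_def by auto
  show "\<forall>y. weakly_essential act e F y"
    unfolding weakly_essential_def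
  proof (intro allI)
    fix f :: "'b \<Rightarrow>\<^sub>L real" and y
    obtain a x where "y = act a x" using factors by blast
    hence "((\<lambda>i. act (e i) y) \<longlongrightarrow> y) F"
      using products_in_essential_part[OF module lai] unfolding essential_part_def by simp
    thus "((\<lambda>i. blinfun_apply f (act (e i) y)) \<longlongrightarrow> blinfun_apply f y) F"
      by (rule bounded_linear.tendsto[OF blinfun.bounded_linear_right])
  qed
next
  assume "\<forall>y. weakly_essential act e F y"
  moreover have "F \<noteq> bot" using e unfolding bounded_left_approx_identity_def by simp
  ultimately have "y \<in> essential_part act e F" for y
    using weakly_essential_in_closure_span_products
      closure_span_products_subset_essential_part[OF module e] by blast
  thus "\<forall>b. \<exists>a x. b = act a x" using cohen_factorization[OF module e] by blast
qed

section \<open>The Arens condition as weak essentiality\<close>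

lemma arens2_transp_as_weak_limit:
  assumes act: "bounded_bilinear act" and "weak_star_conv_bidual e e'' F"
  shows "((\<lambda>i. blinfun_apply f (act (e i) y)) \<longlongrightarrow> blinfun_apply (arens2 (transp_bil act) e'' f) y) F"
proof -
  have act_t: "bounded_bilinear (transp_bil act)"
    unfolding transp_bil_def[abs_def] by (rule bounded_bilinear.flip[OF act])
  have "((\<lambda>i. blinfun_apply (arens1 (transp_bil act) f y) (e i))
      \<longlongrightarrow> blinfun_apply e'' (arens1 (transp_bil act) f y)) F"
    using assms(2) unfolding weak_star_conv_bidual_def by blast
  thus ?thesis by (simp add: arens2_apply[OF act_t] arens1_apply[OF act_t] transp_bil_def)
qed

(* For the forward
   direction test against the canonical image of y in the bidual. *)
lemma arens_left_unit_iff_dual: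
  assumes act: "bounded_bilinear act" and Z: "Zt act e'' = UNIV"
  shows "(\<forall>b''. arens3 act e'' b'' = b'') \<longleftrightarrow> (\<forall>f. arens2 (transp_bil act) e'' f = f)"
proof -
  have act_t: "bounded_bilinear (transp_bil act)"
    unfolding transp_bil_def[abs_def] by (rule bounded_bilinear.flip[OF act])
  have swap: "arens3 act e'' b'' = arens3 (transp_bil act) b'' e''" for b''
  proof -
    have "b'' \<in> Zt act e''" using Z by simp
    thus ?thesis unfolding Zt_def arens3t_def by simp
  qed
  show ?thesis
  proof
    assume unit: "\<forall>b''. arens3 act e'' b'' = b''"
    show "\<forall>f. arens2 (transp_bil act) e'' f = f"
    proof (intro allI blinfun_eqI)
      fix f y
      define Jy :: "('b \<Rightarrow>\<^sub>L real) \<Rightarrow>\<^sub>L real" where "Jy = Blinfun (\<lambda>g. blinfun_apply g y)"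
      have Jy: "blinfun_apply Jy g = blinfun_apply g y" for g
        unfolding Jy_def by (simp add: bounded_linear_Blinfun_apply[OF blinfun.bounded_linear_left])
      have "arens3 (transp_bil act) Jy e'' = Jy" using unit swap[of Jy] by simp
      hence "blinfun_apply (arens3 (transp_bil act) Jy e'') f = blinfun_apply Jy f" by simp
      thus "blinfun_apply (arens2 (transp_bil act) e'' f) y = blinfun_apply f y"
        by (simp add: arens3_apply[OF act_t] Jy)
    qed
  next
    assume "\<forall>f. arens2 (transp_bil act) e'' f = f"
    thus "\<forall>b''. arens3 act e'' b'' = b''"
      by (auto intro!: blinfun_eqI simp: swap arens3_apply[OF act_t])
  qed
qed

theorem arens_condition_iff_weakly_essential:
  assumes act: "bounded_bilinear act" and F: "F \<noteq> bot"
    and e'': "weak_star_conv_bidual e e'' F" and Z: "Zt act e'' = UNIV"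
  shows "(\<forall>b''. arens3 act e'' b'' = b'') \<longleftrightarrow> (\<forall>y. weakly_essential act e F y)"
  unfolding arens_left_unit_iff_dual[OF act Z] weakly_essential_def
proof (intro iffI allI)
  fix f :: "'b \<Rightarrow>\<^sub>L real" and y assume "\<forall>f. arens2 (transp_bil act) e'' f = f"
  thus "((\<lambda>i. blinfun_apply f (act (e i) y)) \<longlongrightarrow> blinfun_apply f y) F"
    using arens2_transp_as_weak_limit[OF act e'', of f y] by simp
next
  fix f :: "'b \<Rightarrow>\<^sub>L real"
  assume "\<forall>y (f :: 'b \<Rightarrow>\<^sub>L real). ((\<lambda>i. blinfun_apply f (act (e i) y)) \<longlongrightarrow> blinfun_apply f y) F"
  thus "arens2 (transp_bil act) e'' f = f"
    by (intro blinfun_eqI tendsto_unique[OF F arens2_transp_as_weak_limit[OF act e'']]) simp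
qed

theorem mainTheorem16:
  fixes act :: "'a::{real_normed_algebra,banach} \<Rightarrow> 'b::banach \<Rightarrow> 'b"
    and e :: "'i \<Rightarrow> 'a" and F :: "'i filter"
    and e'' :: "('a \<Rightarrow>\<^sub>L real) \<Rightarrow>\<^sub>L real"
  assumes "banach_left_module act"
    and "bounded_left_approx_identity e F"
    and "weak_star_conv_bidual e e'' F"
    and "\<forall>F''. arens3 ((*) :: 'a \<Rightarrow> 'a \<Rightarrow> 'a) e'' F'' = F''"
    and "Zt act e'' = UNIV"
  shows "(\<forall>b. \<exists>a x. b = act a x) \<longleftrightarrow> (\<forall>b''. arens3 act e'' b'' = b'')"
proof -
  have act: "bounded_bilinear act" using assms(1) unfolding banach_left_module_def by simp
  have F: "F \<noteq> bot" using assms(2) unfolding bounded_left_approx_identity_def by simp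
  show ?thesis
    unfolding factorization_iff_weakly_essential[OF assms(1,2)]
      arens_condition_iff_weakly_essential[OF act F assms(3,5)] ..
qed

end
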